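(* Let $\mathsf V$ be a quantale, $X=(X,a)$ a $\mathsf V$-category, $s=(x_n)_{n\in\mathbb N}$ a sequence in $X$ and $x\in X$. Then $$\bigvee_{N\in\mathbb N}\bigwedge_{n\ge N}a(x_n,x)\ \ge\ \mathrm{Cauchy}(s)\otimes\bigwedge_{N\in\mathbb N}\bigvee_{n\ge N}a(x_n,x).$$
   Context: A quantale $(\mathsf V,\otimes,k)$ is a complete anti-symmetric lattice with an associative, commutative operation $\otimes$ with neutral element $k$ distributing over arbitrary suprema. A $\mathsf V$-category $(X,a)$ is a set with $a:X\times X\to\mathsf V$ such that $k\le a(x,x)$ and $a(x,y)\otimes a(y,z)\le a(x,z)$. For a sequence $s=(x_n)$, $\mathrm{Cauchy}(s)=\bigvee_{N}\bigwedge_{n,m\ge N}a(x_n,x_m)$. *)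

theory Defs
  imports Main
begin

definition quantale :: "('v::complete_lattice \<Rightarrow> 'v \<Rightarrow> 'v) \<Rightarrow> 'v \<Rightarrow> bool" where
  "quantale tensor k \<longleftrightarrow>
     (\<forall>u v w. tensor (tensor u v) w = tensor u (tensor v w)) \<and>
     (\<forall>u v. tensor u v = tensor v u) \<and>
     (\<forall>u. tensor k u = u) \<and>
     (\<forall>u S. tensor u (Sup S) = (SUP v\<in>S. tensor u v))"

definition V_category :: "('v::complete_lattice \<Rightarrow> 'v \<Rightarrow> 'v) \<Rightarrow> 'v \<Rightarrow> ('x \<Rightarrow> 'x \<Rightarrow> 'v) \<Rightarrow> bool" where
  "V_category tensor k a \<longleftrightarrow>
     (\<forall>x. k \<le> a x x) \<and> (\<forall>x y z. tensor (a x y) (a y z) \<le> a x z)"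

definition Cauchy :: "('x \<Rightarrow> 'x \<Rightarrow> 'v::complete_lattice) \<Rightarrow> (nat \<Rightarrow> 'x) \<Rightarrow> 'v" where
  "Cauchy a s = (SUP N. INF p\<in>{(n,m). n \<ge> N \<and> m \<ge> N}. a (s (fst p)) (s (snd p)))"

end

theory Submission
  imports Defs
begin

text \<open>Let \<open>C N\<close> be the infimum of \<open>a(x\<^sub>n, x\<^sub>m)\<close> over \<open>n, m \<ge> N\<close>, so that
  \<open>Cauchy(s)\<close> is the supremum of the \<open>C N\<close>. For \<open>m, n \<ge> N\<close> transitivity gives
  \<open>C N \<otimes> a(x\<^sub>n, x) \<le> a(x\<^sub>m, x\<^sub>n) \<otimes> a(x\<^sub>n, x) \<le> a(x\<^sub>m, x)\<close>; since \<open>\<otimes>\<close> preserves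
  suprema, \<open>C N\<close> tensored with the tail supremum over \<open>n \<ge> N\<close> lies below the tail
  infimum over \<open>m \<ge> N\<close>. The limit superior is below every tail supremum, so
  distributing \<open>\<otimes>\<close> over the supremum of the \<open>C N\<close> gives the claim.\<close>

lemma quantale_commute: "quantale tensor k \<Longrightarrow> tensor u v = tensor v u"
  unfolding quantale_def by blast

lemma quantale_tensor_SUP:
  "quantale tensor k \<Longrightarrow> tensor u (SUP i\<in>I. f i) = (SUP i\<in>I. tensor u (f i))"
  unfolding quantale_def by (simp add: image_image)

lemma quantale_tensor_mono:
  assumes "quantale tensor k" "u \<le> u'" "v \<le> v'"
  shows "tensor u v \<le> tensor u' v'"
proof -
  have mono_right: "tensor w v \<le> tensor w v'" if "v \<le> v'" for w v v'
  proof -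
    have "tensor w v' = tensor w (sup v v')"
      using that by (simp add: sup_absorb2)
    also have "\<dots> = sup (tensor w v) (tensor w v')"
      using quantale_tensor_SUP[OF assms(1), of w "\<lambda>y. y" "{v, v'}"] by simp
    finally show ?thesis by (metis sup.cobounded1)
  qed
  have "tensor u v \<le> tensor u v'" using mono_right assms(3) .
  also have "\<dots> = tensor v' u" using quantale_commute[OF assms(1)] .
  also have "\<dots> \<le> tensor v' u'" using mono_right assms(2) .
  also have "\<dots> = tensor u' v'" using quantale_commute[OF assms(1)] .
  finally show ?thesis .
qed

lemma V_category_trans: "V_category tensor k a \<Longrightarrow> tensor (a x y) (a y z) \<le> a x z"
  unfolding V_category_def by blast

definition Cauchy_stage :: "('x \<Rightarrow> 'x \<Rightarrow> 'v::complete_lattice) \<Rightarrow> (nat \<Rightarrow> 'x) \<Rightarrow> nat \<Rightarrow> 'v" where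
  "Cauchy_stage a s N = (INF p\<in>{(n,m). n \<ge> N \<and> m \<ge> N}. a (s (fst p)) (s (snd p)))"

lemma Cauchy_eq_SUP_Cauchy_stage: "Cauchy a s = (SUP N. Cauchy_stage a s N)"
  unfolding Cauchy_def Cauchy_stage_def ..

lemma Cauchy_stage_le: "N \<le> m \<Longrightarrow> N \<le> n \<Longrightarrow> Cauchy_stage a s N \<le> a (s m) (s n)"
  unfolding Cauchy_stage_def by (rule INF_lower2[of "(m, n)"]) auto

lemma Cauchy_stage_tensor_tail_le:
  assumes "quantale tensor k" "V_category tensor k a"
  shows "tensor (Cauchy_stage a s N) (SUP n\<in>{N..}. a (s n) x) \<le> (INF m\<in>{N..}. a (s m) x)"
proof (rule INF_greatest)
  fix m assume "m \<in> {N..}"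
  then have "tensor (Cauchy_stage a s N) (a (s n) x) \<le> a (s m) x" if "n \<in> {N..}" for n
    using that quantale_tensor_mono[OF assms(1) Cauchy_stage_le order_refl]
      V_category_trans[OF assms(2)] by (meson atLeast_iff order_trans)
  then show "tensor (Cauchy_stage a s N) (SUP n\<in>{N..}. a (s n) x) \<le> a (s m) x"
    unfolding quantale_tensor_SUP[OF assms(1)] by (rule SUP_least) simp
qed

theorem lemma3p11:
  fixes tensor :: "'v::complete_lattice \<Rightarrow> 'v \<Rightarrow> 'v" and k :: 'v
    and a :: "'x \<Rightarrow> 'x \<Rightarrow> 'v" and s :: "nat \<Rightarrow> 'x" and x :: 'x
  assumes "quantale tensor k"
    and "V_category tensor k a"
  shows "tensor (Cauchy a s) (INF N. SUP n\<in>{N..}. a (s n) x)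
           \<le> (SUP N. INF n\<in>{N..}. a (s n) x)"
proof -
  let ?limsup = "INF N. SUP n\<in>{N..}. a (s n) x"
  have "tensor (Cauchy a s) ?limsup = tensor ?limsup (SUP N. Cauchy_stage a s N)"
    by (simp add: Cauchy_eq_SUP_Cauchy_stage quantale_commute[OF assms(1)])
  also have "\<dots> = (SUP N. tensor ?limsup (Cauchy_stage a s N))"
    by (rule quantale_tensor_SUP[OF assms(1)])
  also have "\<dots> = (SUP N. tensor (Cauchy_stage a s N) ?limsup)"
    by (simp only: quantale_commute[OF assms(1), of ?limsup])
  also have "\<dots> \<le> (SUP N. tensor (Cauchy_stage a s N) (SUP n\<in>{N..}. a (s n) x))"
    by (intro SUP_mono' quantale_tensor_mono[OF assms(1)] order_refl INF_lower) simp
  also have "\<dots> \<le> (SUP N. INF n\<in>{N..}. a (s n) x)"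
    by (intro SUP_mono' Cauchy_stage_tensor_tail_le[OF assms])
  finally show ?thesis .
qed

end
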